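(* Let $G$ be a simplicial group and $M$ an abelian $\pi_0(G)$-module. Define $\eta_1:G_1\to (N_1G/B_1NG)\times G_0$ by $\eta_1(g_1)=\big(g_1\,(s_0d_1g_1)^{-1}B_1NG,\ d_1g_1\big)$. Then $z'\mapsto \big((g_1,g_0)\mapsto z'(\eta_1(g_1),g_0)\big)$ defines an isomorphism $Z^2(T^1G,M)\to Z^2(G,M)$ which restricts to an isomorphism $B^2(T^1G,M)\to B^2(G,M)$. In particular $H^2(G,M)\cong H^2(T^1G,M)$.
   Context: Simplicial group $G$: groups $G_n$, faces $d_k$, degeneracies $s_k$. Moore complex $N_0G=G_0$, $N_nG=\bigcap_{k=1}^n\ker d_k$, differential $d_0$; $B_nNG=d_0(N_{n+1}G)$; $\pi_0(G)=G_0/B_0NG$. Cochains of $G$: $C^n(G,M)=\mathrm{Map}(G_{n-1}\times\cdots\times G_0,M)$, $(dc)(g_n,\dots,g_0)=c(d_0g_n,\dots,d_0g_1)+\sum_{k=1}^n(-1)^kc(d_kg_n,\dots,d_kg_{k+1},(d_kg_k)g_{k-1},g_{k-2},\dots,g_0)+(-1)^{n+1}\langle g_n\rangle\cdot c(g_{n-1},\dots,g_0)$, where $\langle g\rangle\in\pi_0(G)$ is the class of $d_1\cdots d_n(g)$. The crossed module $T^1G$: group part $G_0$, module part $N_1G/B_1NG$, structure map $xB_1NG\mapsto d_0x$, action ${}^g(xB_1NG)=s_0(g)xs_0(g)^{-1}B_1NG$; $\pi_0(T^1G)=\pi_0(G)$. For a crossed module $V=(G_V,M_V,\mu)$ with $\bar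 g$ the class of $g$ in $\pi_0(V)=G_V/\mu(M_V)$: $C^1(V,M)=\mathrm{Map}(G_V,M)$, $C^2(V,M)=\mathrm{Map}(M_V\times G_V\times G_V,M)$, $C^3(V,M)=\mathrm{Map}(M_V\times M_V\times G_V\times M_V\times G_V\times G_V,M)$, $(dc)(m,h,g)=c(\mu(m)h)-c(hg)+\bar h\cdot c(g)$, $(dc)(p,n,k,m,h,g)=c(p,\mu(n)k,\mu(m)h)-c(pn,k,hg)+c(n\,{}^km,kh,g)-\bar k\cdot c(m,h,g)$. *)

theory Defs
  imports "HOL-Algebra.Algebra"
begin

text \<open>A simplicial group: groups G n, faces d n k : G n -> G (n-1) (k \<le> n, n \<ge> 1),
  degeneracies s n k : G n -> G (n+1) (k \<le> n). All levels share one element type.\<close>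

record 'a simplicial =
  sgrp  :: "nat \<Rightarrow> 'a monoid"
  face  :: "nat \<Rightarrow> nat \<Rightarrow> 'a \<Rightarrow> 'a"
  degen :: "nat \<Rightarrow> nat \<Rightarrow> 'a \<Rightarrow> 'a"

definition simplicial_group :: "'a simplicial \<Rightarrow> bool" where
  "simplicial_group S \<longleftrightarrow>
     (let G = sgrp S; d = face S; s = degen S in
     (\<forall>n. group (G n)) \<and>
     (\<forall>n i. 1 \<le> n \<and> i \<le> n \<longrightarrow> d n i \<in> hom (G n) (G (n - 1))) \<and>
     (\<forall>n i. i \<le> n \<longrightarrow> s n i \<in> hom (G n) (G (Suc n))) \<and>
     (\<forall>n i j x. 2 \<le> n \<and> i < j \<and> j \<le> n \<and> x \<in> carrier (G n) \<longrightarrow>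
         d (n - 1) i (d n j x) = d (n - 1) (j - 1) (d n i x)) \<and>
     (\<forall>n i j x. i < j \<and> j \<le> n \<and> x \<in> carrier (G n) \<longrightarrow>
         d (Suc n) i (s n j x) = s (n - 1) (j - 1) (d n i x)) \<and>
     (\<forall>n j x. j \<le> n \<and> x \<in> carrier (G n) \<longrightarrow>
         d (Suc n) j (s n j x) = x \<and> d (Suc n) (Suc j) (s n j x) = x) \<and>
     (\<forall>n i j x. Suc j < i \<and> i \<le> Suc n \<and> x \<in> carrier (G n) \<longrightarrow>
         d (Suc n) i (s n j x) = s (n - 1) j (d n (i - 1) x)) \<and>
     (\<forall>n i j x. i \<le> j \<and> j \<le> n \<and> x \<in> carrier (G n) \<longrightarrow>
         s (Suc n) i (s n j x) = s (Suc n) (Suc j) (s n i x)))"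

definition moore :: "'a simplicial \<Rightarrow> nat \<Rightarrow> 'a set" where
  "moore S n = (if n = 0 then carrier (sgrp S 0)
     else {x \<in> carrier (sgrp S n). \<forall>k\<in>{1..n}. face S n k x = \<one>\<^bsub>sgrp S (n - 1)\<^esub>})"

definition mooreB :: "'a simplicial \<Rightarrow> nat \<Rightarrow> 'a set" where
  "mooreB S n = face S (Suc n) 0 ` moore S (Suc n)"

definition pi0 :: "'a simplicial \<Rightarrow> 'a set monoid" where
  "pi0 S = sgrp S 0 Mod mooreB S 0"

definition cls0 :: "'a simplicial \<Rightarrow> 'a \<Rightarrow> 'a set" where
  "cls0 S g = mooreB S 0 #>\<^bsub>sgrp S 0\<^esub> g"

definition pi0_module :: "'a simplicial \<Rightarrow> ('a set \<Rightarrow> 'm::ab_group_add \<Rightarrow> 'm) \<Rightarrow> bool" where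
  "pi0_module S \<rho> \<longleftrightarrow>
     (\<forall>x\<in>carrier (pi0 S). \<forall>a b. \<rho> x (a + b) = \<rho> x a + \<rho> x b) \<and>
     (\<forall>a. \<rho> \<one>\<^bsub>pi0 S\<^esub> a = a) \<and>
     (\<forall>x\<in>carrier (pi0 S). \<forall>y\<in>carrier (pi0 S). \<forall>a. \<rho> (x \<otimes>\<^bsub>pi0 S\<^esub> y) a = \<rho> x (\<rho> y a))"

text \<open>Cochains of G in degrees 1,2 (maps on G_0, resp. G_1 x G_0; extensional),
  and the coboundaries C^1 -> C^2 -> C^3 instantiated from the general formula.\<close>

definition sdom1 :: "'a simplicial \<Rightarrow> 'a set" where
  "sdom1 S = carrier (sgrp S 0)"

definition sdom2 :: "'a simplicial \<Rightarrow> ('a \<times> 'a) set" where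
  "sdom2 S = carrier (sgrp S 1) \<times> carrier (sgrp S 0)"

definition sC1 :: "'a simplicial \<Rightarrow> ('a \<Rightarrow> 'm) set" where
  "sC1 S = extensional (sdom1 S)"

definition sC2 :: "'a simplicial \<Rightarrow> ('a \<times> 'a \<Rightarrow> 'm) set" where
  "sC2 S = extensional (sdom2 S)"

definition sd1 :: "'a simplicial \<Rightarrow> ('a set \<Rightarrow> 'm::ab_group_add \<Rightarrow> 'm) \<Rightarrow> ('a \<Rightarrow> 'm) \<Rightarrow> 'a \<times> 'a \<Rightarrow> 'm" where
  "sd1 S \<rho> c = (\<lambda>(g1, g0).
      c (face S 1 0 g1)
    - c (face S 1 1 g1 \<otimes>\<^bsub>sgrp S 0\<^esub> g0)
    + \<rho> (cls0 S (face S 1 1 g1)) (c g0))"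

definition sd2 :: "'a simplicial \<Rightarrow> ('a set \<Rightarrow> 'm::ab_group_add \<Rightarrow> 'm) \<Rightarrow> ('a \<times> 'a \<Rightarrow> 'm) \<Rightarrow> 'a \<times> 'a \<times> 'a \<Rightarrow> 'm" where
  "sd2 S \<rho> c = (\<lambda>(g2, g1, g0).
      c (face S 2 0 g2, face S 1 0 g1)
    - c (face S 2 1 g2, face S 1 1 g1 \<otimes>\<^bsub>sgrp S 0\<^esub> g0)
    + c (face S 2 2 g2 \<otimes>\<^bsub>sgrp S 1\<^esub> g1, g0)
    - \<rho> (cls0 S (face S 1 1 (face S 2 2 g2))) (c (g1, g0)))"

definition sZ2 :: "'a simplicial \<Rightarrow> ('a set \<Rightarrow> 'm::ab_group_add \<Rightarrow> 'm) \<Rightarrow> ('a \<times> 'a \<Rightarrow> 'm) set" where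
  "sZ2 S \<rho> = {c \<in> sC2 S. \<forall>g2\<in>carrier (sgrp S 2). \<forall>g1\<in>carrier (sgrp S 1). \<forall>g0\<in>carrier (sgrp S 0).
                  sd2 S \<rho> c (g2, g1, g0) = 0}"

definition sB2 :: "'a simplicial \<Rightarrow> ('a set \<Rightarrow> 'm::ab_group_add \<Rightarrow> 'm) \<Rightarrow> ('a \<times> 'a \<Rightarrow> 'm) set" where
  "sB2 S \<rho> = (\<lambda>c. restrict (sd1 S \<rho> c) (sdom2 S)) ` sC1 S"

record ('g, 'h) xmod =
  xG   :: "'g monoid"
  xM   :: "'h monoid"
  xmu  :: "'h \<Rightarrow> 'g"
  xact :: "'g \<Rightarrow> 'h \<Rightarrow> 'h"

definition xcls :: "('g, 'h) xmod \<Rightarrow> 'g \<Rightarrow> 'g set" where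
  "xcls V g = (xmu V ` carrier (xM V)) #>\<^bsub>xG V\<^esub> g"

definition xdom1 :: "('g, 'h) xmod \<Rightarrow> 'g set" where
  "xdom1 V = carrier (xG V)"

definition xdom2 :: "('g, 'h) xmod \<Rightarrow> ('h \<times> 'g \<times> 'g) set" where
  "xdom2 V = carrier (xM V) \<times> carrier (xG V) \<times> carrier (xG V)"

definition xC1 :: "('g, 'h) xmod \<Rightarrow> ('g \<Rightarrow> 'm) set" where
  "xC1 V = extensional (xdom1 V)"

definition xC2 :: "('g, 'h) xmod \<Rightarrow> ('h \<times> 'g \<times> 'g \<Rightarrow> 'm) set" where
  "xC2 V = extensional (xdom2 V)"

definition xd1 :: "('g, 'h) xmod \<Rightarrow> ('g set \<Rightarrow> 'm::ab_group_add \<Rightarrow> 'm) \<Rightarrow> ('g \<Rightarrow> 'm) \<Rightarrow> 'h \<times> 'g \<times> 'g \<Rightarrow> 'm" where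
  "xd1 V \<rho> c = (\<lambda>(m, h, g).
      c (xmu V m \<otimes>\<^bsub>xG V\<^esub> h) - c (h \<otimes>\<^bsub>xG V\<^esub> g) + \<rho> (xcls V h) (c g))"

definition xd2 :: "('g, 'h) xmod \<Rightarrow> ('g set \<Rightarrow> 'm::ab_group_add \<Rightarrow> 'm) \<Rightarrow> ('h \<times> 'g \<times> 'g \<Rightarrow> 'm)
     \<Rightarrow> 'h \<times> 'h \<times> 'g \<times> 'h \<times> 'g \<times> 'g \<Rightarrow> 'm" where
  "xd2 V \<rho> c = (\<lambda>(p, n, k, m, h, g).
      c (p, xmu V n \<otimes>\<^bsub>xG V\<^esub> k, xmu V m \<otimes>\<^bsub>xG V\<^esub> h)
    - c (p \<otimes>\<^bsub>xM V\<^esub> n, k, h \<otimes>\<^bsub>xG V\<^esub> g)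
    + c (n \<otimes>\<^bsub>xM V\<^esub> xact V k m, k \<otimes>\<^bsub>xG V\<^esub> h, g)
    - \<rho> (xcls V k) (c (m, h, g)))"

definition xZ2 :: "('g, 'h) xmod \<Rightarrow> ('g set \<Rightarrow> 'm::ab_group_add \<Rightarrow> 'm) \<Rightarrow> ('h \<times> 'g \<times> 'g \<Rightarrow> 'm) set" where
  "xZ2 V \<rho> = {c \<in> xC2 V. \<forall>p\<in>carrier (xM V). \<forall>n\<in>carrier (xM V). \<forall>k\<in>carrier (xG V).
                  \<forall>m\<in>carrier (xM V). \<forall>h\<in>carrier (xG V). \<forall>g\<in>carrier (xG V).
                  xd2 V \<rho> c (p, n, k, m, h, g) = 0}"

definition xB2 :: "('g, 'h) xmod \<Rightarrow> ('g set \<Rightarrow> 'm::ab_group_add \<Rightarrow> 'm) \<Rightarrow> ('h \<times> 'g \<times> 'g \<Rightarrow> 'm) set" where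
  "xB2 V \<rho> = (\<lambda>c. restrict (xd1 V \<rho> c) (xdom2 V)) ` xC1 V"

definition T1 :: "'a simplicial \<Rightarrow> ('a, 'a set) xmod" where
  "T1 S = xmod.make (sgrp S 0)
            ((sgrp S 1)\<lparr>carrier := moore S 1\<rparr> Mod mooreB S 1)
            (\<lambda>Y. the_elem (face S 1 0 ` Y))
            (\<lambda>g Y. the_elem ((\<lambda>y. mooreB S 1 #>\<^bsub>sgrp S 1\<^esub>
                       (degen S 0 0 g \<otimes>\<^bsub>sgrp S 1\<^esub> y \<otimes>\<^bsub>sgrp S 1\<^esub> inv\<^bsub>sgrp S 1\<^esub> (degen S 0 0 g))) ` Y))"

definition eta1 :: "'a simplicial \<Rightarrow> 'a \<Rightarrow> 'a set \<times> 'a" where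
  "eta1 S g1 = (mooreB S 1 #>\<^bsub>sgrp S 1\<^esub>
                  (g1 \<otimes>\<^bsub>sgrp S 1\<^esub> inv\<^bsub>sgrp S 1\<^esub> (degen S 0 0 (face S 1 1 g1))),
                face S 1 1 g1)"

definition Phi :: "'a simplicial \<Rightarrow> ('a set \<times> 'a \<times> 'a \<Rightarrow> 'm) \<Rightarrow> 'a \<times> 'a \<Rightarrow> 'm" where
  "Phi S z' = restrict (\<lambda>(g1, g0). z' (fst (eta1 S g1), snd (eta1 S g1), g0)) (sdom2 S)"

definition addon :: "'x set \<Rightarrow> ('x \<Rightarrow> 'm::ab_group_add) \<Rightarrow> ('x \<Rightarrow> 'm) \<Rightarrow> 'x \<Rightarrow> 'm" where
  "addon D f g = restrict (\<lambda>x. f x + g x) D"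

end

theory Submission
  imports Defs
begin

(* Everything happens in degrees <= 2 of G, developed in the locale simplicial_grp:
   (1) the low-degree simplicial identities and the groups N_1, N_2, B_1 (B_1 normal in G_1);
   (2) T^1 G made explicit: module elements are cosets aB_1 (a in N_1), and the boundary map,
       product and action are computed on representatives;
   (3) normal form: g1 = a * s_0 h with a in N_1, h = d_1 g1, and eta_1 g1 = (aB_1, h), so
       Phi z (a * s_0 h, g) = z (aB_1, h, g); hence Phi is injective on cochains;
   (4) standard 2-simplices s_0 p * s_1 n * s_0 s_0 k, on which the simplicial coboundary of
       Phi z is the crossed-module coboundary of z, and which represent every 2-simplex up
       to a boundary in the d_0-face;
   (5) simplicial 2-cocycles are B_1-invariant, hence descend to T^1 G; this gives
       surjectivity on cocycles; additivity and Phi (d c) = d c are direct computations. *)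

text \<open>Keep the numeral 1 intact, so that the level indices of faces match the abbreviations.\<close>

declare One_nat_def [simp del]

lemma nat_facts: "(2::nat) - 1 = 1" "(1::nat) - 1 = 0" "Suc 1 = 2" "Suc 0 = 1"
  by simp_all

text \<open>Cosets and set products do not depend on the carrier of the ambient monoid; needed
  because the module part of T^1 G is a quotient of the subgroup structure on N_1 G.\<close>

lemma r_coset_carrier_update: "r_coset (M\<lparr>carrier := C\<rparr>) A b = r_coset M A b"
  by (simp add: r_coset_def)

lemma set_mult_carrier_update: "set_mult (M\<lparr>carrier := C\<rparr>) A B = set_mult M A B"
  by (simp add: set_mult_def)

lemma (in group) cancel_inv_left [simp]:
  "x \<in> carrier G \<Longrightarrow> y \<in> carrier G \<Longrightarrow> inv x \<otimes> (x \<otimes> y) = y"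
  by (simp add: m_assoc [symmetric])

lemma (in group) cancel_inv_right [simp]:
  "x \<in> carrier G \<Longrightarrow> y \<in> carrier G \<Longrightarrow> x \<otimes> (inv x \<otimes> y) = y"
  by (simp add: m_assoc [symmetric])

locale simplicial_grp =
  fixes S :: "'a simplicial"
  assumes simplicial: "simplicial_group S"
begin

abbreviation "G0 \<equiv> sgrp S 0"
abbreviation "G1 \<equiv> sgrp S 1"
abbreviation "G2 \<equiv> sgrp S 2"
abbreviation "d10 \<equiv> face S 1 0"
abbreviation "d11 \<equiv> face S 1 1"
abbreviation "d20 \<equiv> face S 2 0"
abbreviation "d21 \<equiv> face S 2 1"
abbreviation "d22 \<equiv> face S 2 2"
abbreviation "s00 \<equiv> degen S 0 0"
abbreviation "s10 \<equiv> degen S 1 0"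
abbreviation "s11 \<equiv> degen S 1 1"

lemmas simplicial_axioms = simplicial[unfolded simplicial_group_def Let_def]

lemma group_level: "group (sgrp S n)"
  using simplicial_axioms[THEN conjunct1] by blast

lemma face_hom: "1 \<le> n \<Longrightarrow> i \<le> n \<Longrightarrow> face S n i \<in> hom (sgrp S n) (sgrp S (n - 1))"
  using simplicial_axioms[THEN conjunct2, THEN conjunct1] by blast

lemma degen_hom: "i \<le> n \<Longrightarrow> degen S n i \<in> hom (sgrp S n) (sgrp S (Suc n))"
  using simplicial_axioms[THEN conjunct2, THEN conjunct2, THEN conjunct1] by blast

lemma face_face: "2 \<le> n \<Longrightarrow> i < j \<Longrightarrow> j \<le> n \<Longrightarrow> x \<in> carrier (sgrp S n) \<Longrightarrow>
    face S (n - 1) i (face S n j x) = face S (n - 1) (j - 1) (face S n i x)"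
  using simplicial_axioms[THEN conjunct2, THEN conjunct2, THEN conjunct2, THEN conjunct1] by blast

lemma face_degen_below: "i < j \<Longrightarrow> j \<le> n \<Longrightarrow> x \<in> carrier (sgrp S n) \<Longrightarrow>
    face S (Suc n) i (degen S n j x) = degen S (n - 1) (j - 1) (face S n i x)"
  using simplicial_axioms[THEN conjunct2, THEN conjunct2, THEN conjunct2, THEN conjunct2, THEN conjunct1] by blast

lemma face_degen_same: "j \<le> n \<Longrightarrow> x \<in> carrier (sgrp S n) \<Longrightarrow>
    face S (Suc n) j (degen S n j x) = x \<and> face S (Suc n) (Suc j) (degen S n j x) = x"
  using simplicial_axioms[THEN conjunct2, THEN conjunct2, THEN conjunct2, THEN conjunct2, THEN conjunct2, THEN conjunct1] by blast

lemma face_degen_above: "Suc j < i \<Longrightarrow> i \<le> Suc n \<Longrightarrow> x \<in> carrier (sgrp S n) \<Longrightarrow>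
    face S (Suc n) i (degen S n j x) = degen S (n - 1) j (face S n (i - 1) x)"
  using simplicial_axioms[THEN conjunct2, THEN conjunct2, THEN conjunct2, THEN conjunct2, THEN conjunct2, THEN conjunct2, THEN conjunct1] by blast

sublocale G0: group G0 by (rule group_level)
sublocale G1: group G1 by (rule group_level)
sublocale G2: group G2 by (rule group_level)

lemma group_hom_level: "f \<in> hom (sgrp S n) (sgrp S m) \<Longrightarrow> group_hom (sgrp S n) (sgrp S m) f"
  by (simp add: group_hom_def group_hom_axioms_def group_level)

sublocale D10: group_hom G1 G0 d10
  using face_hom[of 1 0, unfolded nat_facts] by (rule group_hom_level) simp_all
sublocale D11: group_hom G1 G0 d11
  using face_hom[of 1 1, unfolded nat_facts] by (rule group_hom_level) simp_all
sublocale D20: group_hom G2 G1 d20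
  using face_hom[of 2 0, unfolded nat_facts] by (rule group_hom_level) simp_all
sublocale D21: group_hom G2 G1 d21
  using face_hom[of 2 1, unfolded nat_facts] by (rule group_hom_level) simp_all
sublocale D22: group_hom G2 G1 d22
  using face_hom[of 2 2, unfolded nat_facts] by (rule group_hom_level) simp_all
sublocale S00: group_hom G0 G1 s00
  using degen_hom[of 0 0, unfolded nat_facts] by (rule group_hom_level) simp_all
sublocale S10: group_hom G1 G2 s10
  using degen_hom[of 0 1, unfolded nat_facts] by (rule group_hom_level) simp_all
sublocale S11: group_hom G1 G2 s11
  using degen_hom[of 1 1, unfolded nat_facts] by (rule group_hom_level) simp_all

lemma d10_d22: "x \<in> carrier G2 \<Longrightarrow> d10 (d22 x) = d11 (d20 x)"
  using face_face[of 2 0 2 x] unfolding nat_facts by simp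
lemma d11_d22: "x \<in> carrier G2 \<Longrightarrow> d11 (d22 x) = d11 (d21 x)"
  using face_face[of 2 1 2 x] unfolding nat_facts by simp
lemma d10_d21: "x \<in> carrier G2 \<Longrightarrow> d10 (d21 x) = d10 (d20 x)"
  using face_face[of 2 0 1 x] unfolding nat_facts by simp
lemma d20_s11: "x \<in> carrier G1 \<Longrightarrow> d20 (s11 x) = s00 (d10 x)"
  using face_degen_below[of 0 1 1 x] unfolding nat_facts by simp
lemma d21_s11: "x \<in> carrier G1 \<Longrightarrow> d21 (s11 x) = x"
  using face_degen_same[of 1 1 x] unfolding nat_facts by simp
lemma d22_s11: "x \<in> carrier G1 \<Longrightarrow> d22 (s11 x) = x"
  using face_degen_same[of 1 1 x] unfolding nat_facts by simp
lemma d20_s10: "x \<in> carrier G1 \<Longrightarrow> d20 (s10 x) = x"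
  using face_degen_same[of 0 1 x] unfolding nat_facts by simp
lemma d21_s10: "x \<in> carrier G1 \<Longrightarrow> d21 (s10 x) = x"
  using face_degen_same[of 0 1 x] unfolding nat_facts by simp
lemma d22_s10: "x \<in> carrier G1 \<Longrightarrow> d22 (s10 x) = s00 (d11 x)"
  using face_degen_above[of 0 2 1 x] unfolding nat_facts by simp
lemma d10_s00: "x \<in> carrier G0 \<Longrightarrow> d10 (s00 x) = x"
  using face_degen_same[of 0 0 x] unfolding nat_facts by simp
lemma d11_s00: "x \<in> carrier G0 \<Longrightarrow> d11 (s00 x) = x"
  using face_degen_same[of 0 0 x] unfolding nat_facts by simp

subsection \<open>The Moore complex in low degrees\<close>

abbreviation "N1 \<equiv> moore S 1"
abbreviation "N2 \<equiv> moore S 2"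
abbreviation "B1 \<equiv> mooreB S 1"
abbreviation "B0 \<equiv> mooreB S 0"
abbreviation "rc a \<equiv> B1 #>\<^bsub>G1\<^esub> a"

lemma mem_N1: "x \<in> N1 \<longleftrightarrow> x \<in> carrier G1 \<and> d11 x = \<one>\<^bsub>G0\<^esub>"
  unfolding moore_def nat_facts by simp

lemma mem_N2: "x \<in> N2 \<longleftrightarrow> x \<in> carrier G2 \<and> d21 x = \<one>\<^bsub>G1\<^esub> \<and> d22 x = \<one>\<^bsub>G1\<^esub>"
proof -
  have "{1..2::nat} = {1,2}" by auto
  then show ?thesis unfolding moore_def nat_facts by simp
qed

lemma B1_eq: "B1 = d20 ` N2"
  unfolding mooreB_def nat_facts ..

lemma B0_eq: "B0 = d10 ` N1"
  unfolding mooreB_def nat_facts ..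

lemma N1_subgroup: "subgroup N1 G1"
proof -
  have "N1 = kernel G1 G0 d11" by (auto simp: kernel_def mem_N1)
  then show ?thesis using D11.subgroup_kernel by simp
qed

lemma N2_subgroup: "subgroup N2 G2"
proof (rule G2.subgroupI)
  show "N2 \<subseteq> carrier G2" by (auto simp: mem_N2)
  have "\<one>\<^bsub>G2\<^esub> \<in> N2" by (simp add: mem_N2)
  then show "N2 \<noteq> {}" by blast
qed (auto simp: mem_N2)

text \<open>N_1 is stable under conjugation by degenerate elements; this is the action of
  G_0 on the module part of T^1 G.\<close>

lemma N1_conj: "k \<in> carrier G0 \<Longrightarrow> m \<in> N1 \<Longrightarrow> s00 k \<otimes>\<^bsub>G1\<^esub> m \<otimes>\<^bsub>G1\<^esub> inv\<^bsub>G1\<^esub> (s00 k) \<in> N1"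
  unfolding mem_N1 by (simp add: d11_s00)

lemma B1_in_N1: "b \<in> B1 \<Longrightarrow> b \<in> N1"
  by (auto simp: B1_eq mem_N1 mem_N2 d10_d22[symmetric])

lemma B1_carrier: "b \<in> B1 \<Longrightarrow> b \<in> carrier G1"
  using B1_in_N1 mem_N1 by blast

lemma B1_d10: "b \<in> B1 \<Longrightarrow> d10 b = \<one>\<^bsub>G0\<^esub>"
  by (auto simp: B1_eq mem_N2 d10_d21[symmetric])

lemma B1_subgroup: "subgroup B1 G1"
  unfolding B1_eq
  by (rule D20.subgroup_img_is_subgroup[OF N2_subgroup])

text \<open>B_1 is normal in G_1: conjugating by g amounts to conjugating a preimage in N_2
  by s_0 g.\<close>

lemma B1_conj: "g \<in> carrier G1 \<Longrightarrow> b \<in> B1 \<Longrightarrow> g \<otimes>\<^bsub>G1\<^esub> b \<otimes>\<^bsub>G1\<^esub> inv\<^bsub>G1\<^esub> g \<in> B1"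
proof -
  assume g: "g \<in> carrier G1" and b: "b \<in> B1"
  obtain x where x: "x \<in> N2" "b = d20 x" using b unfolding B1_eq by blast
  have xc: "x \<in> carrier G2" using x mem_N2 by blast
  let ?y = "s10 g \<otimes>\<^bsub>G2\<^esub> x \<otimes>\<^bsub>G2\<^esub> inv\<^bsub>G2\<^esub> (s10 g)"
  have "?y \<in> N2" using x g xc by (simp add: mem_N2 d21_s10 d22_s10)
  moreover have "g \<otimes>\<^bsub>G1\<^esub> b \<otimes>\<^bsub>G1\<^esub> inv\<^bsub>G1\<^esub> g = d20 ?y" using x g xc by (simp add: d20_s10)
  ultimately show ?thesis unfolding B1_eq by blast
qed

lemma B1_normal: "B1 \<lhd> G1"
  unfolding G1.normal_inv_iff using B1_subgroup B1_conj by blast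

lemma rc_absorb: "b \<in> B1 \<Longrightarrow> a \<in> carrier G1 \<Longrightarrow> rc (b \<otimes>\<^bsub>G1\<^esub> a) = rc a"
  using G1.coset_mult_assoc[of B1 b a] B1_carrier subgroup.rcos_const[OF B1_subgroup G1.group_axioms]
  by (metis subsetI)

lemma rc_elem: "y \<in> rc a \<Longrightarrow> \<exists>b\<in>B1. y = b \<otimes>\<^bsub>G1\<^esub> a"
  by (auto simp: r_coset_def)

lemma rc_self: "a \<in> carrier G1 \<Longrightarrow> a \<in> rc a"
  by (rule G1.rcos_self[OF _ B1_subgroup])

subsection \<open>The crossed module T^1 G made explicit\<close>

lemma T1_xG [simp]: "xG (T1 S) = G0"
  by (simp add: T1_def xmod.make_def)

lemma xM_carrier: "carrier (xM (T1 S)) = rc ` N1"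
  by (auto simp: T1_def xmod.make_def FactGroup_def RCOSETS_def r_coset_carrier_update)

lemma xdom2_T1: "xdom2 (T1 S) = rc ` N1 \<times> carrier G0 \<times> carrier G0"
  by (simp add: xdom2_def xM_carrier)

lemma xM_mult: "a \<in> carrier G1 \<Longrightarrow> b \<in> carrier G1 \<Longrightarrow> rc a \<otimes>\<^bsub>xM (T1 S)\<^esub> rc b = rc (a \<otimes>\<^bsub>G1\<^esub> b)"
  by (simp add: T1_def xmod.make_def FactGroup_def set_mult_carrier_update
      normal.rcos_sum[OF B1_normal])

lemma the_elem_image_rc:
  assumes a: "a \<in> carrier G1"
    and const: "\<And>b. b \<in> B1 \<Longrightarrow> f (b \<otimes>\<^bsub>G1\<^esub> a) = f a"
  shows "the_elem (f ` rc a) = f a"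
proof -
  have "f ` rc a \<subseteq> {f a}" using const by (auto dest!: rc_elem)
  moreover have "f a \<in> f ` rc a" using rc_self[OF a] by blast
  ultimately have "f ` rc a = {f a}" by blast
  then show ?thesis by simp
qed

lemma xmu_rc: "a \<in> carrier G1 \<Longrightarrow> xmu (T1 S) (rc a) = d10 a"
  unfolding T1_def xmod.make_def xmod.simps
  by (rule the_elem_image_rc) (simp_all add: B1_carrier B1_d10)

lemma xact_rc: "k \<in> carrier G0 \<Longrightarrow> a \<in> carrier G1 \<Longrightarrow>
   xact (T1 S) k (rc a) = rc (s00 k \<otimes>\<^bsub>G1\<^esub> a \<otimes>\<^bsub>G1\<^esub> inv\<^bsub>G1\<^esub> (s00 k))"
  unfolding T1_def xmod.make_def xmod.simps
proof (rule the_elem_image_rc)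
  fix b assume b: "b \<in> B1" and k: "k \<in> carrier G0" and a: "a \<in> carrier G1"
  have bc: "b \<in> carrier G1" using B1_carrier b by blast
  have sk: "s00 k \<in> carrier G1" using k by simp
  have "s00 k \<otimes>\<^bsub>G1\<^esub> (b \<otimes>\<^bsub>G1\<^esub> a) \<otimes>\<^bsub>G1\<^esub> inv\<^bsub>G1\<^esub> (s00 k)
      = (s00 k \<otimes>\<^bsub>G1\<^esub> b \<otimes>\<^bsub>G1\<^esub> inv\<^bsub>G1\<^esub> (s00 k)) \<otimes>\<^bsub>G1\<^esub>
        (s00 k \<otimes>\<^bsub>G1\<^esub> a \<otimes>\<^bsub>G1\<^esub> inv\<^bsub>G1\<^esub> (s00 k))"
    using bc sk a by (simp add: G1.m_assoc)
  then show "rc (s00 k \<otimes>\<^bsub>G1\<^esub> (b \<otimes>\<^bsub>G1\<^esub> a) \<otimes>\<^bsub>G1\<^esub> inv\<^bsub>G1\<^esub> (s00 k))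
      = rc (s00 k \<otimes>\<^bsub>G1\<^esub> a \<otimes>\<^bsub>G1\<^esub> inv\<^bsub>G1\<^esub> (s00 k))"
    using rc_absorb[OF B1_conj[OF sk b]] sk a by simp
qed

text \<open>The boundary map of T^1 G has image B_0, so pi_0(T^1 G) = pi_0(G) class by class.\<close>

lemma xcls_T1: "xcls (T1 S) k = cls0 S k"
proof -
  have "xmu (T1 S) ` carrier (xM (T1 S)) = d10 ` N1"
    unfolding xM_carrier image_image using xmu_rc mem_N1 by (auto simp: image_def)
  then show ?thesis by (simp add: xcls_def cls0_def B0_eq)
qed

subsection \<open>Normal form in degree 1 and the comparison map\<close>

lemma normal_part_N1: "g1 \<in> carrier G1 \<Longrightarrow> g1 \<otimes>\<^bsub>G1\<^esub> inv\<^bsub>G1\<^esub> (s00 (d11 g1)) \<in> N1"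
  unfolding mem_N1 by (simp add: d11_s00)

lemma normal_form: "g1 \<in> carrier G1 \<Longrightarrow> g1 = (g1 \<otimes>\<^bsub>G1\<^esub> inv\<^bsub>G1\<^esub> (s00 (d11 g1))) \<otimes>\<^bsub>G1\<^esub> s00 (d11 g1)"
  by (simp add: G1.m_assoc)

lemma sdom2_normal_form:
  assumes "t \<in> sdom2 S"
  obtains a h g where "t = (a \<otimes>\<^bsub>G1\<^esub> s00 h, g)" "a \<in> N1" "h \<in> carrier G0" "g \<in> carrier G0"
proof -
  obtain g1 g where t: "t = (g1, g)" by (cases t)
  have g1: "g1 \<in> carrier G1" and g: "g \<in> carrier G0" using assms t by (auto simp: sdom2_def)
  show ?thesis using that[OF _ normal_part_N1[OF g1] _ g] normal_form[OF g1] g1 t by simp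
qed

lemma Phi_normal_form:
  assumes a: "a \<in> N1" and h: "h \<in> carrier G0" and g: "g \<in> carrier G0"
  shows "Phi S z (a \<otimes>\<^bsub>G1\<^esub> s00 h, g) = z (rc a, h, g)"
proof -
  have ac: "a \<in> carrier G1" and a1: "d11 a = \<one>\<^bsub>G0\<^esub>" using a mem_N1 by auto
  have "d11 (a \<otimes>\<^bsub>G1\<^esub> s00 h) = h" using ac a1 h by (simp add: d11_s00)
  moreover have "a \<otimes>\<^bsub>G1\<^esub> s00 h \<otimes>\<^bsub>G1\<^esub> inv\<^bsub>G1\<^esub> (s00 h) = a"
    using ac h by (simp add: G1.m_assoc)
  ultimately show ?thesis using ac h g by (simp add: Phi_def sdom2_def eta1_def)
qed

lemma Phi_B1_invariant:
  assumes b: "b \<in> B1" and y: "y \<in> carrier G1" and w: "w \<in> carrier G0"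
  shows "Phi S z (b \<otimes>\<^bsub>G1\<^esub> y, w) = Phi S z (y, w)"
proof -
  have bc: "b \<in> carrier G1" and b1: "d11 b = \<one>\<^bsub>G0\<^esub>" using B1_in_N1[OF b] mem_N1 by auto
  have "d11 (b \<otimes>\<^bsub>G1\<^esub> y) = d11 y" using bc b1 y by simp
  moreover have "rc (b \<otimes>\<^bsub>G1\<^esub> y \<otimes>\<^bsub>G1\<^esub> inv\<^bsub>G1\<^esub> (s00 (d11 y))) = rc (y \<otimes>\<^bsub>G1\<^esub> inv\<^bsub>G1\<^esub> (s00 (d11 y)))"
    using rc_absorb[OF b, of "y \<otimes>\<^bsub>G1\<^esub> inv\<^bsub>G1\<^esub> (s00 (d11 y))"] bc y by (simp add: G1.m_assoc)
  ultimately show ?thesis using bc y w by (simp add: Phi_def sdom2_def eta1_def)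
qed

text \<open>Phi takes cochains to cochains, and is injective since every argument of a
  crossed-module 2-cochain is hit by a normal form.\<close>

lemma Phi_C2: "Phi S z \<in> sC2 S"
  by (simp add: Phi_def sC2_def)

lemma Phi_inj: "inj_on (Phi S :: ('a set \<times> 'a \<times> 'a \<Rightarrow> 'm) \<Rightarrow> _) (xC2 (T1 S))"
proof (rule inj_onI)
  fix z1 z2 :: "'a set \<times> 'a \<times> 'a \<Rightarrow> 'm"
  assume z1: "z1 \<in> xC2 (T1 S)" and z2: "z2 \<in> xC2 (T1 S)" and eq: "Phi S z1 = Phi S z2"
  show "z1 = z2"
  proof (rule ext)
    fix t :: "'a set \<times> 'a \<times> 'a"
    show "z1 t = z2 t"
    proof (cases "t \<in> xdom2 (T1 S)")
      case True
      then obtain a h g where t: "t = (rc a, h, g)" and a: "a \<in> N1"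
        and h: "h \<in> carrier G0" and g: "g \<in> carrier G0"
        unfolding xdom2_T1 by blast
      have "z1 t = Phi S z1 (a \<otimes>\<^bsub>G1\<^esub> s00 h, g)"
        unfolding t by (rule Phi_normal_form[OF a h g, symmetric])
      also have "\<dots> = z2 t"
        unfolding eq t by (rule Phi_normal_form[OF a h g])
      finally show ?thesis .
    next
      case False
      then show ?thesis using z1 z2 unfolding xC2_def by (metis extensional_arb)
    qed
  qed
qed

subsection \<open>Standard 2-simplices\<close>

text \<open>The 2-simplex s_0 p * s_1 n * s_0 s_0 k has faces p * s_0(d_0 n * k), p n s_0 k and
  n s_0 k; for p, n in N_1 these are normal forms, so Phi can be evaluated on them.\<close>

definition std2 :: "'a \<Rightarrow> 'a \<Rightarrow> 'a \<Rightarrow> 'a" where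
  "std2 p n k = s10 p \<otimes>\<^bsub>G2\<^esub> s11 n \<otimes>\<^bsub>G2\<^esub> s10 (s00 k)"

lemma std2_carrier:
  "p \<in> carrier G1 \<Longrightarrow> n \<in> carrier G1 \<Longrightarrow> k \<in> carrier G0 \<Longrightarrow> std2 p n k \<in> carrier G2"
  by (simp add: std2_def)

lemma std2_faces:
  assumes p: "p \<in> N1" and n: "n \<in> N1" and k: "k \<in> carrier G0"
  shows "d20 (std2 p n k) = p \<otimes>\<^bsub>G1\<^esub> s00 (d10 n \<otimes>\<^bsub>G0\<^esub> k)"
    and "d21 (std2 p n k) = (p \<otimes>\<^bsub>G1\<^esub> n) \<otimes>\<^bsub>G1\<^esub> s00 k"
    and "d22 (std2 p n k) = n \<otimes>\<^bsub>G1\<^esub> s00 k"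
proof -
  have pc: "p \<in> carrier G1" and p1: "d11 p = \<one>\<^bsub>G0\<^esub>" using p mem_N1 by auto
  have nc: "n \<in> carrier G1" using n mem_N1 by auto
  show "d20 (std2 p n k) = p \<otimes>\<^bsub>G1\<^esub> s00 (d10 n \<otimes>\<^bsub>G0\<^esub> k)"
    using pc nc k by (simp add: std2_def d20_s10 d20_s11 G1.m_assoc)
  show "d21 (std2 p n k) = (p \<otimes>\<^bsub>G1\<^esub> n) \<otimes>\<^bsub>G1\<^esub> s00 k"
    using pc nc k by (simp add: std2_def d21_s10 d21_s11 G1.m_assoc)
  show "d22 (std2 p n k) = n \<otimes>\<^bsub>G1\<^esub> s00 k"
    using pc nc k p1 by (simp add: std2_def d22_s10 d22_s11 d11_s00 G1.m_assoc)
qed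

lemma sd2_Phi_std2:
  assumes p: "p \<in> N1" and n: "n \<in> N1" and m: "m \<in> N1"
    and k: "k \<in> carrier G0" and h: "h \<in> carrier G0" and g: "g \<in> carrier G0"
  shows "sd2 S \<rho> (Phi S z) (std2 p n k, m \<otimes>\<^bsub>G1\<^esub> s00 h, g)
       = xd2 (T1 S) \<rho> z (rc p, rc n, k, rc m, h, g)"
proof -
  have pc: "p \<in> carrier G1" using p mem_N1 by auto
  have nc: "n \<in> carrier G1" and n1: "d11 n = \<one>\<^bsub>G0\<^esub>" using n mem_N1 by auto
  have mc: "m \<in> carrier G1" and m1: "d11 m = \<one>\<^bsub>G0\<^esub>" using m mem_N1 by auto
  let ?m' = "s00 k \<otimes>\<^bsub>G1\<^esub> m \<otimes>\<^bsub>G1\<^esub> inv\<^bsub>G1\<^esub> (s00 k)"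
  have pn: "p \<otimes>\<^bsub>G1\<^esub> n \<in> N1" by (rule subgroup.m_closed[OF N1_subgroup p n])
  have nm': "n \<otimes>\<^bsub>G1\<^esub> ?m' \<in> N1" by (rule subgroup.m_closed[OF N1_subgroup n N1_conj[OF k m]])
  have term0: "Phi S z (d20 (std2 p n k), d10 (m \<otimes>\<^bsub>G1\<^esub> s00 h))
      = z (rc p, d10 n \<otimes>\<^bsub>G0\<^esub> k, d10 m \<otimes>\<^bsub>G0\<^esub> h)"
    using std2_faces(1)[OF p n k] Phi_normal_form[OF p, of "d10 n \<otimes>\<^bsub>G0\<^esub> k" "d10 m \<otimes>\<^bsub>G0\<^esub> h" z]
      nc k mc h by (simp add: d10_s00)
  have term1: "Phi S z (d21 (std2 p n k), d11 (m \<otimes>\<^bsub>G1\<^esub> s00 h) \<otimes>\<^bsub>G0\<^esub> g)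
      = z (rc (p \<otimes>\<^bsub>G1\<^esub> n), k, h \<otimes>\<^bsub>G0\<^esub> g)"
    using std2_faces(2)[OF p n k] Phi_normal_form[OF pn k, of "h \<otimes>\<^bsub>G0\<^esub> g" z]
      mc m1 h g by (simp add: d11_s00)
  have term2: "Phi S z (d22 (std2 p n k) \<otimes>\<^bsub>G1\<^esub> (m \<otimes>\<^bsub>G1\<^esub> s00 h), g)
      = z (rc (n \<otimes>\<^bsub>G1\<^esub> ?m'), k \<otimes>\<^bsub>G0\<^esub> h, g)"
  proof -
    have "d22 (std2 p n k) \<otimes>\<^bsub>G1\<^esub> (m \<otimes>\<^bsub>G1\<^esub> s00 h) = (n \<otimes>\<^bsub>G1\<^esub> ?m') \<otimes>\<^bsub>G1\<^esub> s00 (k \<otimes>\<^bsub>G0\<^esub> h)"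
      using std2_faces(3)[OF p n k] nc mc k h by (simp add: G1.m_assoc)
    then show ?thesis using Phi_normal_form[OF nm', of "k \<otimes>\<^bsub>G0\<^esub> h" g z] k h g by simp
  qed
  have term3: "Phi S z (m \<otimes>\<^bsub>G1\<^esub> s00 h, g) = z (rc m, h, g)"
    by (rule Phi_normal_form[OF m h g])
  have outer_face: "d11 (d22 (std2 p n k)) = k"
    using std2_faces(3)[OF p n k] nc n1 k by (simp add: d11_s00)
  have action: "rc n \<otimes>\<^bsub>xM (T1 S)\<^esub> xact (T1 S) k (rc m) = rc (n \<otimes>\<^bsub>G1\<^esub> ?m')"
    using xact_rc[OF k mc] xM_mult[OF nc, of ?m'] k mc by simp
  show ?thesis
    by (simp only: sd2_def xd2_def case_prod_conv term0 term1 term2 term3 outer_face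
        xmu_rc[OF nc] xmu_rc[OF mc] xM_mult[OF pc nc] action T1_xG xcls_T1)
qed

text \<open>Every 2-simplex differs from a standard one only by a boundary in its d_0-face: with
  k = d_1 d_2 g2, n = d_2 g2 (s_0 k)^{-1}, p = d_1 g2 (d_2 g2)^{-1}, the quotient of g2 by
  std2 p n k lies in N_2.\<close>

lemma std2_cover:
  assumes g2: "g2 \<in> carrier G2"
  obtains p n k b where "p \<in> N1" "n \<in> N1" "k \<in> carrier G0" "b \<in> B1"
    "d20 g2 = b \<otimes>\<^bsub>G1\<^esub> d20 (std2 p n k)" "d21 g2 = d21 (std2 p n k)" "d22 g2 = d22 (std2 p n k)"
proof -
  define k where "k = d11 (d22 g2)"
  define n where "n = d22 g2 \<otimes>\<^bsub>G1\<^esub> inv\<^bsub>G1\<^esub> (s00 k)"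
  define p where "p = d21 g2 \<otimes>\<^bsub>G1\<^esub> inv\<^bsub>G1\<^esub> (d22 g2)"
  have k: "k \<in> carrier G0" using g2 by (simp add: k_def)
  have n: "n \<in> N1" unfolding mem_N1 n_def using g2 k by (simp add: d11_s00 k_def)
  have p: "p \<in> N1" unfolding mem_N1 p_def using g2 by (simp add: d11_d22)
  let ?o = "std2 p n k"
  have oc: "?o \<in> carrier G2" using p n k mem_N1 by (simp add: std2_carrier)
  have "(p \<otimes>\<^bsub>G1\<^esub> n) \<otimes>\<^bsub>G1\<^esub> s00 k = d21 g2"
    unfolding p_def n_def using g2 k by (simp add: G1.m_assoc)
  then have f1: "d21 ?o = d21 g2" using std2_faces(2)[OF p n k] by simp
  have "n \<otimes>\<^bsub>G1\<^esub> s00 k = d22 g2"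
    unfolding n_def using g2 k by (simp add: G1.m_assoc)
  then have f2: "d22 ?o = d22 g2" using std2_faces(3)[OF p n k] by simp
  define x where "x = g2 \<otimes>\<^bsub>G2\<^esub> inv\<^bsub>G2\<^esub> ?o"
  have "x \<in> N2" unfolding mem_N2 x_def using g2 oc f1 f2 by simp
  then have "d20 x \<in> B1" unfolding B1_eq by blast
  moreover have "d20 g2 = d20 x \<otimes>\<^bsub>G1\<^esub> d20 ?o"
    unfolding x_def using g2 oc by (simp add: G1.m_assoc)
  ultimately show ?thesis using that p n k f1 f2 by simp
qed

subsection \<open>Cocycles\<close>

lemma sZ2_vanish:
  "c \<in> sZ2 S \<rho> \<Longrightarrow> g2 \<in> carrier G2 \<Longrightarrow> g1 \<in> carrier G1 \<Longrightarrow> g0 \<in> carrier G0 \<Longrightarrow>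
   sd2 S \<rho> c (g2, g1, g0) = 0"
  unfolding sZ2_def by blast

lemma sZ2_C2: "c \<in> sZ2 S \<rho> \<Longrightarrow> c \<in> sC2 S"
  unfolding sZ2_def by (rule Collect_restrict[THEN subsetD])

text \<open>Phi maps cocycles to cocycles: replace g2 by its standard representative (allowed by
  B_1-invariance of Phi z) and g1 by its normal form, then apply the key computation.\<close>

lemma Phi_cocycle:
  assumes z: "z \<in> xZ2 (T1 S) \<rho>"
  shows "Phi S z \<in> sZ2 S \<rho>"
proof -
  have "sd2 S \<rho> (Phi S z) (g2, g1, g0) = 0"
    if g2: "g2 \<in> carrier G2" and g1: "g1 \<in> carrier G1" and g0: "g0 \<in> carrier G0" for g2 g1 g0
  proof -
    obtain p n k b where p: "p \<in> N1" and n: "n \<in> N1" and k: "k \<in> carrier G0" and b: "b \<in> B1"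
      and f0: "d20 g2 = b \<otimes>\<^bsub>G1\<^esub> d20 (std2 p n k)"
      and f1: "d21 g2 = d21 (std2 p n k)" and f2: "d22 g2 = d22 (std2 p n k)"
      using std2_cover[OF g2] .
    have "(g1, g0) \<in> sdom2 S" using g1 g0 by (simp add: sdom2_def)
    then obtain m h where m: "m \<in> N1" and h: "h \<in> carrier G0" and g1_eq: "g1 = m \<otimes>\<^bsub>G1\<^esub> s00 h"
      by (rule sdom2_normal_form) simp
    have oc: "std2 p n k \<in> carrier G2" using p n k mem_N1 by (simp add: std2_carrier)
    have "Phi S z (d20 g2, d10 g1) = Phi S z (d20 (std2 p n k), d10 g1)"
      unfolding f0 using oc g1 by (intro Phi_B1_invariant[OF b]) simp_all
    then have "sd2 S \<rho> (Phi S z) (g2, g1, g0) = sd2 S \<rho> (Phi S z) (std2 p n k, g1, g0)"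
      by (simp only: sd2_def case_prod_conv f1 f2)
    also have "\<dots> = xd2 (T1 S) \<rho> z (rc p, rc n, k, rc m, h, g0)"
      unfolding g1_eq by (rule sd2_Phi_std2[OF p n m k h g0])
    also have "\<dots> = 0"
      using z p n m k h g0 unfolding xZ2_def xM_carrier by auto
    finally show ?thesis .
  qed
  then show ?thesis by (simp add: sZ2_def Phi_C2)
qed

text \<open>Conversely, a simplicial 2-cocycle c satisfies c(b y, w) = c(y, w) for b in B_1:
  compare its coboundary at (x * s_0 y, s_0 w, 1) and at (s_0 y, s_0 w, 1), where b = d_0 x
  with x in N_2; all terms except the first coincide.\<close>

lemma cocycle_B1_invariant:
  assumes c: "c \<in> sZ2 S \<rho>" and b: "b \<in> B1" and y: "y \<in> carrier G1" and w: "w \<in> carrier G0"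
  shows "c (b \<otimes>\<^bsub>G1\<^esub> y, w) = c (y, w)"
proof -
  obtain x where x: "x \<in> N2" "b = d20 x" using b unfolding B1_eq by blast
  have xc: "x \<in> carrier G2" and x1: "d21 x = \<one>\<^bsub>G1\<^esub>" and x2: "d22 x = \<one>\<^bsub>G1\<^esub>"
    using x(1) mem_N2 by auto
  let ?A = "x \<otimes>\<^bsub>G2\<^esub> s10 y" and ?B = "s10 y"
  let ?rest = "c (y, w \<otimes>\<^bsub>G0\<^esub> \<one>\<^bsub>G0\<^esub>) - c (s00 (d11 y) \<otimes>\<^bsub>G1\<^esub> s00 w, \<one>\<^bsub>G0\<^esub>)
     + \<rho> (cls0 S (d11 (s00 (d11 y)))) (c (s00 w, \<one>\<^bsub>G0\<^esub>))"
  have w0: "d10 (s00 w) = w" "d11 (s00 w) = w" using w by (simp_all add: d10_s00 d11_s00)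
  have "sd2 S \<rho> c (?A, s00 w, \<one>\<^bsub>G0\<^esub>) = 0" "sd2 S \<rho> c (?B, s00 w, \<one>\<^bsub>G0\<^esub>) = 0"
    using sZ2_vanish[OF c] xc y w by simp_all
  moreover have "sd2 S \<rho> c (?A, s00 w, \<one>\<^bsub>G0\<^esub>) = c (b \<otimes>\<^bsub>G1\<^esub> y, w) - ?rest"
    using xc y x(2) x1 x2 w0 by (simp add: sd2_def d20_s10 d21_s10 d22_s10 algebra_simps)
  moreover have "sd2 S \<rho> c (?B, s00 w, \<one>\<^bsub>G0\<^esub>) = c (y, w) - ?rest"
    using y w0 by (simp add: sd2_def d20_s10 d21_s10 d22_s10 algebra_simps)
  ultimately show ?thesis by simp
qed

text \<open>Hence a simplicial cocycle descends to a cochain on T^1 G, evaluated on any representative.\<close>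

definition descend :: "('a \<times> 'a \<Rightarrow> 'm) \<Rightarrow> 'a set \<times> 'a \<times> 'a \<Rightarrow> 'm" where
  "descend c = restrict (\<lambda>(P, h, g). c ((SOME a. a \<in> P) \<otimes>\<^bsub>G1\<^esub> s00 h, g)) (xdom2 (T1 S))"

lemma descend_rc:
  assumes c: "c \<in> sZ2 S \<rho>" and m: "m \<in> N1" and h: "h \<in> carrier G0" and g: "g \<in> carrier G0"
  shows "descend c (rc m, h, g) = c (m \<otimes>\<^bsub>G1\<^esub> s00 h, g)"
proof -
  have mc: "m \<in> carrier G1" using m mem_N1 by auto
  define a where "a = (SOME a. a \<in> rc m)"
  have "a \<in> rc m" unfolding a_def using rc_self[OF mc] by (rule someI)
  then obtain b where b: "b \<in> B1" "a = b \<otimes>\<^bsub>G1\<^esub> m" using rc_elem by blast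
  have "descend c (rc m, h, g) = c (a \<otimes>\<^bsub>G1\<^esub> s00 h, g)"
    using m h g unfolding descend_def a_def xdom2_T1 by simp
  also have "a \<otimes>\<^bsub>G1\<^esub> s00 h = b \<otimes>\<^bsub>G1\<^esub> (m \<otimes>\<^bsub>G1\<^esub> s00 h)"
    using b B1_carrier mc h by (simp add: G1.m_assoc)
  also have "c (b \<otimes>\<^bsub>G1\<^esub> (m \<otimes>\<^bsub>G1\<^esub> s00 h), g) = c (m \<otimes>\<^bsub>G1\<^esub> s00 h, g)"
    using mc h by (intro cocycle_B1_invariant[OF c b(1) _ g]) simp
  finally show ?thesis .
qed

text \<open>The descended cochain is a preimage of c under Phi, and a crossed-module cocycle
  because its coboundary is the coboundary of c at a standard simplex.\<close>

lemma Phi_descend: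
  assumes c: "c \<in> sZ2 S \<rho>"
  shows "Phi S (descend c) = c"
proof (rule ext)
  fix t :: "'a \<times> 'a"
  show "Phi S (descend c) t = c t"
  proof (cases "t \<in> sdom2 S")
    case True
    then obtain m h g where t: "t = (m \<otimes>\<^bsub>G1\<^esub> s00 h, g)"
      and m: "m \<in> N1" and h: "h \<in> carrier G0" and g: "g \<in> carrier G0"
      by (rule sdom2_normal_form)
    show ?thesis unfolding t Phi_normal_form[OF m h g] by (rule descend_rc[OF c m h g])
  next
    case False
    have "Phi S (descend c) t = undefined"
      using Phi_C2 False unfolding sC2_def by (rule extensional_arb)
    moreover have "c t = undefined"
      using sZ2_C2[OF c] False unfolding sC2_def by (rule extensional_arb)
    ultimately show ?thesis by simp
  qed
qed

lemma descend_cocycle: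
  assumes c: "c \<in> sZ2 S \<rho>"
  shows "descend c \<in> xZ2 (T1 S) \<rho>"
proof -
  have zero: "xd2 (T1 S) \<rho> (descend c) (rc p, rc n, k, rc m, h, g) = 0"
    if p: "p \<in> N1" and n: "n \<in> N1" and m: "m \<in> N1" and k: "k \<in> carrier G0"
      and h: "h \<in> carrier G0" and g: "g \<in> carrier G0" for p n k m h g
  proof -
    have "std2 p n k \<in> carrier G2" "m \<otimes>\<^bsub>G1\<^esub> s00 h \<in> carrier G1"
      using p n m k h mem_N1 by (simp_all add: std2_carrier)
    then have "sd2 S \<rho> c (std2 p n k, m \<otimes>\<^bsub>G1\<^esub> s00 h, g) = 0"
      using sZ2_vanish[OF c _ _ g] by blast
    then show ?thesis
      using sd2_Phi_std2[OF p n m k h g, of \<rho> "descend c"] Phi_descend[OF c] by simp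
  qed
  show ?thesis unfolding xZ2_def xM_carrier T1_xG
  proof (intro CollectI conjI ballI)
    show "descend c \<in> xC2 (T1 S)" by (simp add: descend_def xC2_def)
    fix P N k M h g
    assume "P \<in> rc ` N1" "N \<in> rc ` N1" and k: "k \<in> carrier G0"
      and "M \<in> rc ` N1" and h: "h \<in> carrier G0" and g: "g \<in> carrier G0"
    then obtain p n m where "P = rc p" "N = rc n" "M = rc m" "p \<in> N1" "n \<in> N1" "m \<in> N1"
      by blast
    then show "xd2 (T1 S) \<rho> (descend c) (P, N, k, M, h, g) = 0" using zero[OF _ _ _ k h g] by simp
  qed
qed

lemma Phi_bij_Z2: "bij_betw (Phi S) (xZ2 (T1 S) \<rho>) (sZ2 S \<rho>)"
proof (rule bij_betw_imageI)
  show "inj_on (Phi S) (xZ2 (T1 S) \<rho>)"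
    unfolding xZ2_def by (rule inj_on_subset[OF Phi_inj Collect_restrict])
  show "Phi S ` xZ2 (T1 S) \<rho> = sZ2 S \<rho>"
  proof
    show "Phi S ` xZ2 (T1 S) \<rho> \<subseteq> sZ2 S \<rho>" using Phi_cocycle by (rule image_subsetI)
    show "sZ2 S \<rho> \<subseteq> Phi S ` xZ2 (T1 S) \<rho>"
    proof
      fix c assume c: "c \<in> sZ2 S \<rho>"
      show "c \<in> Phi S ` xZ2 (T1 S) \<rho>"
        using Phi_descend[OF c] descend_cocycle[OF c] by (rule image_eqI[of c "Phi S", OF sym])
    qed
  qed
qed

subsection \<open>Additivity and coboundaries\<close>

text \<open>Phi is additive: on normal forms it is evaluation.\<close>

lemma Phi_addon: "Phi S (addon (xdom2 (T1 S)) z z') = addon (sdom2 S) (Phi S z) (Phi S z')"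
proof (rule ext)
  fix t :: "'a \<times> 'a"
  show "Phi S (addon (xdom2 (T1 S)) z z') t = addon (sdom2 S) (Phi S z) (Phi S z') t"
  proof (cases "t \<in> sdom2 S")
    case True
    then obtain m h g where t: "t = (m \<otimes>\<^bsub>G1\<^esub> s00 h, g)"
      and m: "m \<in> N1" and h: "h \<in> carrier G0" and g: "g \<in> carrier G0"
      by (rule sdom2_normal_form)
    then show ?thesis using True
      by (simp add: Phi_normal_form[OF m h g] addon_def xdom2_T1)
  next
    case False
    then show ?thesis by (simp add: addon_def Phi_def)
  qed
qed

text \<open>Phi carries the crossed-module coboundary of a 1-cochain to its simplicial coboundary
  (1-cochains are the same on both sides: maps on G_0).\<close>

lemma Phi_coboundary:
  "Phi S (restrict (xd1 (T1 S) \<rho> c) (xdom2 (T1 S))) = restrict (sd1 S \<rho> c) (sdom2 S)"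
proof (rule ext)
  fix t :: "'a \<times> 'a"
  show "Phi S (restrict (xd1 (T1 S) \<rho> c) (xdom2 (T1 S))) t = restrict (sd1 S \<rho> c) (sdom2 S) t"
  proof (cases "t \<in> sdom2 S")
    case True
    then obtain m h g where t: "t = (m \<otimes>\<^bsub>G1\<^esub> s00 h, g)"
      and m: "m \<in> N1" and h: "h \<in> carrier G0" and g: "g \<in> carrier G0"
      by (rule sdom2_normal_form)
    have mc: "m \<in> carrier G1" and m1: "d11 m = \<one>\<^bsub>G0\<^esub>" using m mem_N1 by auto
    have "d10 (m \<otimes>\<^bsub>G1\<^esub> s00 h) = d10 m \<otimes>\<^bsub>G0\<^esub> h" "d11 (m \<otimes>\<^bsub>G1\<^esub> s00 h) = h"
      using mc m1 h by (simp_all add: d10_s00 d11_s00)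
    then show ?thesis using True
      by (simp add: t Phi_normal_form[OF m h g] xdom2_T1 m h g xd1_def sd1_def xmu_rc[OF mc] xcls_T1)
  next
    case False
    then show ?thesis by (simp add: Phi_def)
  qed
qed

text \<open>Since B^2 on both sides is the image of the same 1-cochains, Phi is a bijection on
  coboundaries.\<close>

lemma Phi_bij_B2: "bij_betw (Phi S) (xB2 (T1 S) \<rho>) (sB2 S \<rho>)"
proof (rule bij_betw_imageI)
  show "inj_on (Phi S) (xB2 (T1 S) \<rho>)"
    by (rule inj_on_subset[OF Phi_inj]) (auto simp: xB2_def xC2_def)
  show "Phi S ` xB2 (T1 S) \<rho> = sB2 S \<rho>"
    unfolding xB2_def sB2_def image_image Phi_coboundary
    by (simp add: xC1_def sC1_def xdom1_def sdom1_def)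
qed

end

text \<open>The main theorem.\<close>

theorem proposition3p13:
  fixes S :: "'a simplicial" and \<rho> :: "'a set \<Rightarrow> 'm::ab_group_add \<Rightarrow> 'm"
  assumes "simplicial_group S" and "pi0_module S \<rho>"
  shows "bij_betw (Phi S) (xZ2 (T1 S) \<rho>) (sZ2 S \<rho>)
       \<and> (\<forall>z\<in>xZ2 (T1 S) \<rho>. \<forall>z'\<in>xZ2 (T1 S) \<rho>.
            Phi S (addon (xdom2 (T1 S)) z z') = addon (sdom2 S) (Phi S z) (Phi S z'))
       \<and> bij_betw (Phi S) (xB2 (T1 S) \<rho>) (sB2 S \<rho>)"
proof -
  interpret simplicial_grp S by (rule simplicial_grp.intro[OF assms(1)])
  show ?thesis using Phi_bij_Z2 Phi_addon Phi_bij_B2 by blast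
qed

end
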